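(* Let $K\ge0$, $N\in[n,\infty)$ with $n\ge 2$, $R>0$, and set $\alpha:=N\,\mathcal H(2\sqrt{K/N}\,R)$, where $\mathcal H(t)=t\coth t$ (with $\mathcal H(0)=1$); in particular $\alpha\ge2$. Then there exists a function $h:[0,\infty)\to\mathbb R$ such that: (i) $h\in C^2[0,\infty)$ and $h'(0)=0$; (ii) $\inf_{[0,\infty)}h\ge-\alpha^2 18^\alpha$; (iii) for $t>1/18$: $h''(t)-\frac{h'(t)}t=-\alpha(\alpha+2)t^{-(\alpha+2)}<0$ and $\frac{h'(t)}t=\alpha t^{-(\alpha+2)}>0$; for $0<t\le1/18$: $\big|h''(t)-\frac{h'(t)}t\big|\le 972\,\alpha^2 18^\alpha$ and $0<\frac{h'(t)}t\le 972\,\alpha^2 18^\alpha$. *)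

theory Defs
  imports "HOL-Analysis.Analysis"
begin

definition Hcoth :: "real \<Rightarrow> real" where
  "Hcoth t = (if t = 0 then 1 else t * cosh t / sinh t)"

end

theory Submission
  imports Defs
begin

text \<open>
  Write \<open>E = 18 powr \<alpha>\<close>. Outside \<open>[0, 1/18]\<close> take \<open>h t = - t powr -\<alpha>\<close>; then
  \<open>h' t / t = \<alpha> t powr -(\<alpha>+2)\<close> and \<open>h'' t - h' t / t = -\<alpha>(\<alpha>+2) t powr -(\<alpha>+2)\<close> exactly.
  On \<open>[0, 1/18]\<close> replace it by the cubic \<open>D + P t\<^sup>2/2 + B t\<^sup>3/3\<close>, whose derivative
  \<open>P t + B t\<^sup>2\<close> vanishes at \<open>0\<close> and whose three coefficients are chosen so that the value
  and the first two derivatives agree with the power at \<open>1/18\<close>; this makes \<open>h\<close> of class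
  \<open>C\<^sup>2\<close>. On the cubic piece \<open>h' t / t = P + B t\<close> and \<open>h'' t - h' t / t = B t\<close> are affine,
  so all bounds reduce to the endpoint \<open>t = 1/18\<close>, where they are polynomial inequalities in
  \<open>\<alpha>\<close> times \<open>E\<close> valid for \<open>\<alpha> \<ge> 2\<close>. Finally \<open>\<alpha> \<ge> N \<ge> 2\<close> because \<open>t coth t \<ge> 1\<close>.
\<close>

lemma sinh_le_mult_cosh:
  fixes x :: real
  assumes "x \<ge> 0"
  shows "sinh x \<le> x * cosh x"
proof -
  have "(\<lambda>x. x * cosh x - sinh x) 0 \<le> (\<lambda>x. x * cosh x - sinh x) x"
  proof (rule DERIV_nonneg_imp_nondecreasing[OF assms])
    fix y :: real
    assume "0 \<le> y" "y \<le> x"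
    show "\<exists>d. ((\<lambda>x. x * cosh x - sinh x) has_real_derivative d) (at y) \<and> d \<ge> 0"
      by (rule exI[of _ "y * sinh y"]) (auto intro!: derivative_eq_intros simp: \<open>0 \<le> y\<close>)
  qed
  then show ?thesis
    by simp
qed

lemma Hcoth_ge_1:
  assumes "x \<ge> 0"
  shows "Hcoth x \<ge> 1"
proof (cases "x = 0")
  case False
  then have "sinh x > 0"
    using assms by simp
  then show ?thesis
    using sinh_le_mult_cosh[OF assms] False by (simp add: Hcoth_def field_simps)
qed (simp add: Hcoth_def)

lemma has_real_derivative_if_le:
  fixes f g f' g' :: "real \<Rightarrow> real"
  assumes "a > 0"
    and f: "\<And>t. (f has_real_derivative f' t) (at t)"
    and g: "\<And>t. t > 0 \<Longrightarrow> (g has_real_derivative g' t) (at t)"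
    and "f a = g a" "f' a = g' a"
  shows "((\<lambda>t. if t \<le> a then f t else g t) has_real_derivative
           (if t \<le> a then f' t else g' t)) (at t)"
proof -
  consider "t < a" | "t = a" | "t > a"
    by linarith
  then show ?thesis
  proof cases
    case 1
    show ?thesis
      by (rule has_field_derivative_transform_within_open[of f _ _ "{..<a}"]) (use 1 f in auto)
  next
    case 3
    show ?thesis
      by (rule has_field_derivative_transform_within_open[of g _ _ "{a<..}"])
         (use 3 g assms in auto)
  next
    case 2
    let ?C = "closure {..a} \<inter> closure {a<..}"
    have "(f has_derivative (*) (f' a)) (at a within {..a} \<union> ?C)"
      using f[of a] by (simp add: has_field_derivative_def has_derivative_at_withinI)
    moreover have "(g has_derivative (*) (g' a)) (at a within {a<..} \<union> ?C)"
      using g[of a] assms(1) by (simp add: has_field_derivative_def has_derivative_at_withinI)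
    ultimately have "((\<lambda>x. if x \<in> {..a} then f x else g x) has_derivative
        (if a \<in> {..a} then (*) (f' a) else (*) (g' a))) (at a within {..a} \<union> {a<..})"
      by (intro has_derivative_If_within_closures[where f'="\<lambda>_. (*) (f' a)"
            and g'="\<lambda>_. (*) (g' a)"]) (use assms in auto)
    moreover have "{..a} \<union> {a<..} = (UNIV :: real set)"
      by auto
    ultimately show ?thesis
      using 2 by (simp add: has_field_derivative_def mult.commute)
  qed
qed

text \<open>
  With \<open>E = 18 powr \<alpha>\<close>, the coefficients \<open>P = 324 \<alpha>(\<alpha>+3) E\<close> and \<open>B = -5832 \<alpha>(\<alpha>+2) E\<close>
  of \<open>cubic_cap'\<close> solve \<open>P + B/9 = -324 \<alpha>(\<alpha>+1) E\<close> and \<open>P/18 + B/324 = 18 \<alpha> E\<close>, the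
  second and first derivative of \<open>- t powr -\<alpha>\<close> at \<open>1/18\<close>; the constant of \<open>cubic_cap\<close> then
  matches its value \<open>-E\<close>.
\<close>

definition cubic_cap :: "real \<Rightarrow> real \<Rightarrow> real" where
  "cubic_cap \<alpha> t = 18 powr \<alpha> *
     (- (1 + \<alpha>\<^sup>2 / 6 + 5 * \<alpha> / 6) + 162 * \<alpha> * (\<alpha> + 3) * t\<^sup>2 - 1944 * \<alpha> * (\<alpha> + 2) * t ^ 3)"

definition cubic_cap' :: "real \<Rightarrow> real \<Rightarrow> real" where
  "cubic_cap' \<alpha> t = 18 powr \<alpha> * (324 * \<alpha> * (\<alpha> + 3) * t - 5832 * \<alpha> * (\<alpha> + 2) * t\<^sup>2)"

definition cubic_cap'' :: "real \<Rightarrow> real \<Rightarrow> real" where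
  "cubic_cap'' \<alpha> t = 18 powr \<alpha> * (324 * \<alpha> * (\<alpha> + 3) - 11664 * \<alpha> * (\<alpha> + 2) * t)"

definition capped_power :: "real \<Rightarrow> real \<Rightarrow> real" where
  "capped_power \<alpha> t = (if t \<le> 1/18 then cubic_cap \<alpha> t else - (t powr - \<alpha>))"

definition capped_power' :: "real \<Rightarrow> real \<Rightarrow> real" where
  "capped_power' \<alpha> t = (if t \<le> 1/18 then cubic_cap' \<alpha> t else \<alpha> * t powr - (\<alpha> + 1))"

definition capped_power'' :: "real \<Rightarrow> real \<Rightarrow> real" where
  "capped_power'' \<alpha> t =
     (if t \<le> 1/18 then cubic_cap'' \<alpha> t else - \<alpha> * (\<alpha> + 1) * t powr - (\<alpha> + 2))"

lemma powr_minus_one_eighteenth: "(1/18 :: real) powr - x = 18 powr x"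
  by (simp add: powr_divide powr_minus)

lemma cubic_cap_matches_power:
  "cubic_cap \<alpha> (1/18) = - ((1/18) powr - \<alpha>)"
  "cubic_cap' \<alpha> (1/18) = \<alpha> * (1/18) powr - (\<alpha> + 1)"
  "cubic_cap'' \<alpha> (1/18) = - \<alpha> * (\<alpha> + 1) * (1/18) powr - (\<alpha> + 2)"
  unfolding cubic_cap_def cubic_cap'_def cubic_cap''_def powr_minus_one_eighteenth
  by (simp_all add: powr_add field_simps power2_eq_square power3_eq_cube)

lemma has_real_derivative_capped_power:
  "(capped_power \<alpha> has_real_derivative capped_power' \<alpha> t) (at t)"
proof -
  have "(cubic_cap \<alpha> has_real_derivative cubic_cap' \<alpha> t) (at t)" for t
    unfolding cubic_cap_def cubic_cap'_def
    by (auto intro!: derivative_eq_intros simp: power2_eq_square algebra_simps)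
  moreover have "((\<lambda>t. - (t powr - \<alpha>)) has_real_derivative \<alpha> * t powr - (\<alpha> + 1)) (at t)"
    if "t > 0" for t
    using that by (auto intro!: derivative_eq_intros)
  ultimately show ?thesis
    unfolding capped_power_def capped_power'_def
    by (intro has_real_derivative_if_le) (simp_all add: cubic_cap_matches_power)
qed

lemma has_real_derivative_capped_power':
  "(capped_power' \<alpha> has_real_derivative capped_power'' \<alpha> t) (at t)"
proof -
  have "(cubic_cap' \<alpha> has_real_derivative cubic_cap'' \<alpha> t) (at t)" for t
    unfolding cubic_cap'_def cubic_cap''_def
    by (auto intro!: derivative_eq_intros simp: power2_eq_square algebra_simps)
  moreover have "((\<lambda>t. \<alpha> * t powr - (\<alpha> + 1)) has_real_derivative
      - \<alpha> * (\<alpha> + 1) * t powr - (\<alpha> + 2)) (at t)" if "t > 0" for t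
  proof -
    have exponent: "- 2 - \<alpha> = - \<alpha> - 2"
      by simp
    from that show ?thesis
      by (auto intro!: derivative_eq_intros) (simp only: exponent, simp add: algebra_simps)
  qed
  ultimately show ?thesis
    unfolding capped_power'_def capped_power''_def
    by (intro has_real_derivative_if_le) (simp_all add: cubic_cap_matches_power)
qed

lemma continuous_on_capped_power'': "continuous_on {0..} (capped_power'' \<alpha>)"
proof -
  have "continuous_on {0..} (\<lambda>t. if t \<le> 1/18 then cubic_cap'' \<alpha> t
          else - \<alpha> * (\<alpha> + 1) * t powr - (\<alpha> + 2))"
  proof (rule continuous_on_cases_le)
    show "continuous_on {t \<in> {0..}. t \<le> 1/18} (cubic_cap'' \<alpha>)"
      unfolding cubic_cap''_def by (intro continuous_intros)
    show "continuous_on {t \<in> {0..}. 1/18 \<le> t} (\<lambda>t. - \<alpha> * (\<alpha> + 1) * t powr - (\<alpha> + 2))"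
      by (intro continuous_intros) auto
    show "cubic_cap'' \<alpha> t = - \<alpha> * (\<alpha> + 1) * t powr - (\<alpha> + 2)" if "t = 1/18" for t
      unfolding that by (rule cubic_cap_matches_power(3))
  qed (intro continuous_intros)
  then show ?thesis
    by (simp add: capped_power''_def[abs_def])
qed

lemma capped_power'_0: "capped_power' \<alpha> 0 = 0"
  by (simp add: capped_power'_def cubic_cap'_def)

lemma capped_power_lower_bound:
  assumes "\<alpha> \<ge> 2" "t \<ge> 0"
  shows "capped_power \<alpha> t \<ge> - (\<alpha>\<^sup>2 * 18 powr \<alpha>)"
proof (cases "t \<le> 1/18")
  case True
  have "\<alpha> * (\<alpha> + 2) * (1944 * t) \<le> \<alpha> * (\<alpha> + 2) * 108"
    using True assms by (intro mult_left_mono) auto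
  also have "\<dots> \<le> \<alpha> * (\<alpha> + 3) * 162"
    using assms(1) by (simp add: algebra_simps)
  finally have "t\<^sup>2 * (162 * \<alpha> * (\<alpha> + 3) - 1944 * \<alpha> * (\<alpha> + 2) * t) \<ge> 0"
    using assms(1) by (intro mult_nonneg_nonneg) (simp_all add: algebra_simps)
  moreover have "2 * \<alpha> \<le> \<alpha> * \<alpha>"
    using assms(1) by (intro mult_right_mono) auto
  then have "1 + \<alpha>\<^sup>2 / 6 + 5 * \<alpha> / 6 \<le> \<alpha>\<^sup>2"
    using assms(1) unfolding power2_eq_square by linarith
  ultimately have "- \<alpha>\<^sup>2 \<le> - (1 + \<alpha>\<^sup>2 / 6 + 5 * \<alpha> / 6)
      + 162 * \<alpha> * (\<alpha> + 3) * t\<^sup>2 - 1944 * \<alpha> * (\<alpha> + 2) * t ^ 3"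
    by (simp add: algebra_simps power2_eq_square power3_eq_cube)
  then have "18 powr \<alpha> * - \<alpha>\<^sup>2 \<le> cubic_cap \<alpha> t"
    unfolding cubic_cap_def by (intro mult_left_mono) auto
  then show ?thesis
    using True by (simp add: capped_power_def mult.commute)
next
  case False
  have "t powr - \<alpha> \<le> (1/18) powr - \<alpha>"
    using False assms(1) by (intro powr_mono2') auto
  moreover have "capped_power \<alpha> t = - (t powr - \<alpha>)"
    using False by (simp add: capped_power_def)
  moreover have "1 * 18 powr \<alpha> \<le> \<alpha>\<^sup>2 * 18 powr \<alpha>"
    using mult_mono[of 1 \<alpha> 1 \<alpha>] assms(1) by (intro mult_right_mono) (simp_all add: power2_eq_square)
  ultimately show ?thesis
    unfolding powr_minus_one_eighteenth by linarith
qed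

lemma capped_power_outer:
  assumes "t > 1/18"
  shows "capped_power' \<alpha> t / t = \<alpha> * t powr - (\<alpha> + 2)"
    and "capped_power'' \<alpha> t - capped_power' \<alpha> t / t = - \<alpha> * (\<alpha> + 2) * t powr - (\<alpha> + 2)"
proof -
  have "t powr - (\<alpha> + 1) = t powr - (\<alpha> + 2) * t"
    using powr_add[of t "- (\<alpha> + 2)" 1] assms by (simp add: algebra_simps)
  then show quotient: "capped_power' \<alpha> t / t = \<alpha> * t powr - (\<alpha> + 2)"
    using assms by (simp add: capped_power'_def)
  show "capped_power'' \<alpha> t - capped_power' \<alpha> t / t = - \<alpha> * (\<alpha> + 2) * t powr - (\<alpha> + 2)"
    using assms unfolding quotient by (simp add: capped_power''_def algebra_simps)
qed

lemma capped_power_inner: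
  assumes "0 < t" "t \<le> 1/18"
  shows "capped_power' \<alpha> t / t = 18 powr \<alpha> * (324 * \<alpha> * (\<alpha> + 3) - 5832 * \<alpha> * (\<alpha> + 2) * t)"
    and "capped_power'' \<alpha> t - capped_power' \<alpha> t / t = - 5832 * \<alpha> * (\<alpha> + 2) * 18 powr \<alpha> * t"
  using assms
  by (simp_all add: capped_power'_def capped_power''_def cubic_cap'_def cubic_cap''_def
      field_simps power2_eq_square)

lemma capped_power_inner_bounds:
  assumes "\<alpha> \<ge> 2" "0 < t" "t \<le> 1/18"
  shows "\<bar>capped_power'' \<alpha> t - capped_power' \<alpha> t / t\<bar> \<le> 972 * \<alpha>\<^sup>2 * 18 powr \<alpha>"
    and "0 < capped_power' \<alpha> t / t"
    and "capped_power' \<alpha> t / t \<le> 972 * \<alpha>\<^sup>2 * 18 powr \<alpha>"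
proof -
  define s where "s = 5832 * \<alpha> * (\<alpha> + 2) * t"
  have "\<alpha> * (\<alpha> + 2) * (5832 * t) \<le> \<alpha> * (\<alpha> + 2) * 324"
    using assms by (intro mult_left_mono) auto
  then have s_le: "s \<le> 324 * \<alpha>\<^sup>2 + 648 * \<alpha>"
    unfolding s_def by (simp add: algebra_simps power2_eq_square)
  have s_pos: "0 < s"
    using assms unfolding s_def by simp
  have "2 * \<alpha> \<le> \<alpha>\<^sup>2"
    using assms(1) unfolding power2_eq_square by (intro mult_right_mono) auto
  moreover have "324 * \<alpha> * (\<alpha> + 3) = 324 * \<alpha>\<^sup>2 + 972 * \<alpha>"
    by (simp add: algebra_simps power2_eq_square)
  ultimately have "\<bar>- s\<bar> \<le> 972 * \<alpha>\<^sup>2"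
    and "0 < 324 * \<alpha> * (\<alpha> + 3) - s"
    and "324 * \<alpha> * (\<alpha> + 3) - s \<le> 972 * \<alpha>\<^sup>2"
    using s_le s_pos assms(1) by linarith+
  moreover have "capped_power'' \<alpha> t - capped_power' \<alpha> t / t = - s * 18 powr \<alpha>"
    by (subst capped_power_inner(2)[OF assms(2,3)]) (simp add: s_def)
  moreover have "capped_power' \<alpha> t / t = (324 * \<alpha> * (\<alpha> + 3) - s) * 18 powr \<alpha>"
    by (subst capped_power_inner(1)[OF assms(2,3)]) (simp add: s_def)
  ultimately show "\<bar>capped_power'' \<alpha> t - capped_power' \<alpha> t / t\<bar> \<le> 972 * \<alpha>\<^sup>2 * 18 powr \<alpha>"
    and "0 < capped_power' \<alpha> t / t"
    and "capped_power' \<alpha> t / t \<le> 972 * \<alpha>\<^sup>2 * 18 powr \<alpha>"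
    by (simp_all add: abs_mult)
qed

lemma N_Hcoth_ge_2:
  assumes "K \<ge> 0" "n \<ge> 2" "real n \<le> N" "R > 0"
  shows "N * Hcoth (2 * sqrt (K / N) * R) \<ge> 2"
proof -
  have "N > 0"
    using assms(2,3) by simp
  moreover have "Hcoth (2 * sqrt (K / N) * R) \<ge> 1"
    using assms(1,4) \<open>N > 0\<close> by (intro Hcoth_ge_1) simp
  ultimately have "N * Hcoth (2 * sqrt (K / N) * R) \<ge> N"
    by (simp add: mult_le_cancel_left1)
  then show ?thesis
    using assms(2,3) by linarith
qed

theorem lemma6p1:
  fixes K N R :: real and n :: nat
  assumes "K \<ge> 0" and "n \<ge> 2" and "real n \<le> N" and "R > 0"
  defines "\<alpha> \<equiv> N * Hcoth (2 * sqrt (K / N) * R)"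
  shows "\<exists>h h' h'' :: real \<Rightarrow> real.
    (\<forall>t\<ge>0. (h has_real_derivative h' t) (at t within {0..})) \<and>
    (\<forall>t\<ge>0. (h' has_real_derivative h'' t) (at t within {0..})) \<and>
    continuous_on {0..} h'' \<and>
    h' 0 = 0 \<and>
    (\<forall>t\<ge>0. h t \<ge> - (\<alpha>\<^sup>2 * 18 powr \<alpha>)) \<and>
    (\<forall>t>1/18. h'' t - h' t / t = - \<alpha> * (\<alpha> + 2) * t powr (- (\<alpha> + 2)) \<and>
              h'' t - h' t / t < 0 \<and>
              h' t / t = \<alpha> * t powr (- (\<alpha> + 2)) \<and> h' t / t > 0) \<and>
    (\<forall>t. 0 < t \<and> t \<le> 1/18 \<longrightarrow>
          \<bar>h'' t - h' t / t\<bar> \<le> 972 * \<alpha>\<^sup>2 * 18 powr \<alpha> \<and>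
          0 < h' t / t \<and> h' t / t \<le> 972 * \<alpha>\<^sup>2 * 18 powr \<alpha>)"
proof -
  have \<alpha>: "\<alpha> \<ge> 2"
    unfolding \<alpha>_def using assms(1-4) by (rule N_Hcoth_ge_2)
  show ?thesis
  proof (intro exI conjI allI impI)
    show "(capped_power \<alpha> has_real_derivative capped_power' \<alpha> t) (at t within {0..})"
      and "(capped_power' \<alpha> has_real_derivative capped_power'' \<alpha> t) (at t within {0..})" for t
      by (auto intro: has_field_derivative_at_within
          has_real_derivative_capped_power has_real_derivative_capped_power')
    show "continuous_on {0..} (capped_power'' \<alpha>)" "capped_power' \<alpha> 0 = 0"
      by (rule continuous_on_capped_power'', rule capped_power'_0)
    show "capped_power \<alpha> t \<ge> - (\<alpha>\<^sup>2 * 18 powr \<alpha>)" if "t \<ge> 0" for t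
      using \<alpha> that by (rule capped_power_lower_bound)
  next
    fix t :: real
    assume t: "t > 1/18"
    then have "t powr - (\<alpha> + 2) > 0" "\<alpha> > 0"
      using \<alpha> by auto
    then show "capped_power'' \<alpha> t - capped_power' \<alpha> t / t = - \<alpha> * (\<alpha> + 2) * t powr - (\<alpha> + 2)"
      and "capped_power'' \<alpha> t - capped_power' \<alpha> t / t < 0"
      and "capped_power' \<alpha> t / t = \<alpha> * t powr - (\<alpha> + 2)"
      and "capped_power' \<alpha> t / t > 0"
      using capped_power_outer[OF t] by simp_all
  next
    fix t :: real
    assume "0 < t \<and> t \<le> 1/18"
    then show "\<bar>capped_power'' \<alpha> t - capped_power' \<alpha> t / t\<bar> \<le> 972 * \<alpha>\<^sup>2 * 18 powr \<alpha>"
      and "0 < capped_power' \<alpha> t / t"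
      and "capped_power' \<alpha> t / t \<le> 972 * \<alpha>\<^sup>2 * 18 powr \<alpha>"
      using capped_power_inner_bounds[OF \<alpha>] by auto
  qed
qed

end
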